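(* Let $m=2^p$ and let $r_1,\dots,r_m\in\{1,\dots,m\}$ (repetitions allowed). Let $A$ be the $m\times m$ matrix whose $i$-th row is the $r_i$-th row of $H(m)$. If $b(r_1-1)\oplus b(r_2-1)\oplus\dots\oplus b(r_m-1)\neq 0$, then $\mathrm{perm}\,A=0$.
   Context: For $m=2^p$, the Sylvester matrix $H(m)$ is defined recursively by $H(1)=[1]$ and $H(2^p)=\begin{bmatrix}H(2^{p-1})&H(2^{p-1})\\ H(2^{p-1})&-H(2^{p-1})\end{bmatrix}$, rows and columns indexed $1,\dots,m$; equivalently $[H(m)]_{i,j}=(-1)^{b(i-1)\odot b(j-1)}$. Here $b(x)$ denotes the $p$-bit binary representation of $x\in\{0,\dots,m-1\}$, $\odot$ is the bitwise dot product, and $\oplus$ is bitwise XOR. $\mathrm{perm}\,A=\sum_{\sigma\in S_m}\prod_{i=1}^m a_{i,\sigma(i)}$. *)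

theory Defs
  imports Main "HOL-Combinatorics.Permutations"
begin

text \<open>Sylvester matrix H(2^p), entries indexed 1..2^p (1-based), defined recursively:
  H(1) = [1], H(2^(p+1)) = [[H, H], [H, -H]].\<close>
fun sylvester :: "nat \<Rightarrow> nat \<Rightarrow> nat \<Rightarrow> int" where
  "sylvester 0 i j = 1"
| "sylvester (Suc p) i j =
     (let h = 2 ^ p in
      if i \<le> h \<and> j \<le> h then sylvester p i j
      else if i \<le> h then sylvester p i (j - h)
      else if j \<le> h then sylvester p (i - h) j
      else - sylvester p (i - h) (j - h))"

definition permanent :: "nat \<Rightarrow> (nat \<Rightarrow> nat \<Rightarrow> int) \<Rightarrow> int" where
  "permanent m A = (\<Sum>\<sigma> | \<sigma> permutes {1..m}. \<Prod>i=1..m. A i (\<sigma> i))"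

definition xor_all :: "nat list \<Rightarrow> nat" where
  "xor_all xs = foldr xor xs 0"

end

theory Submission
  imports Defs
begin

text \<open>Write \<open>\<chi>\<^sub>d(x) = (-1)^{b(x) \<odot> b(d)}\<close>; the Sylvester matrix is \<open>[\<chi>\<^sub>j\<^sub>-\<^sub>1(i-1)]\<close>, and
  \<open>\<chi>\<close> is a character of the XOR group in each argument. Permuting the columns by
  \<open>j - 1 \<mapsto> (j - 1) \<oplus> d\<close> therefore multiplies row i of A by \<open>\<chi>\<^sub>d(r\<^sub>i - 1)\<close>, and since the
  permanent is invariant under column permutations, \<open>perm A = \<chi>\<^sub>d(s) perm A\<close> with
  \<open>s = \<Oplus>\<^sub>i (r\<^sub>i - 1)\<close>. Choosing \<open>d = 2\<^sup>k\<close> for a bit k set in s gives \<open>\<chi>\<^sub>d(s) = -1\<close>.\<close>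

unbundle bit_operations_syntax

text \<open>The entry (-1)^{b(x) \<odot> b(y)} of the Sylvester matrix, with 0-based indices x and y.\<close>
definition sylvester_sign :: "nat \<Rightarrow> nat \<Rightarrow> nat \<Rightarrow> int" where
  "sylvester_sign p x y = (\<Prod>k<p. if bit x k \<and> bit y k then -1 else 1)"

lemma sylvester_sign_commute: "sylvester_sign p x y = sylvester_sign p y x"
  unfolding sylvester_sign_def by (simp add: conj_commute)

lemma sylvester_sign_0_left [simp]: "sylvester_sign p 0 y = 1"
  by (simp add: sylvester_sign_def)

lemma sylvester_sign_xor_right:
  "sylvester_sign p x (y XOR z) = sylvester_sign p x y * sylvester_sign p x z"
  unfolding sylvester_sign_def prod.distrib[symmetric]
  by (rule prod.cong) (auto simp: bit_simps)

lemma sylvester_sign_xor_left: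
  "sylvester_sign p (x XOR y) z = sylvester_sign p x z * sylvester_sign p y z"
  by (simp add: sylvester_sign_commute[of p _ z] sylvester_sign_xor_right)

lemma prod_list_sylvester_sign:
  "(\<Prod>x\<leftarrow>xs. sylvester_sign p x y) = sylvester_sign p (xor_all xs) y"
  by (induction xs) (simp_all add: xor_all_def sylvester_sign_xor_left)

lemma prod_sylvester_sign_rows:
  "(\<Prod>i=1..m. sylvester_sign p (r i - 1) y) =
     sylvester_sign p (xor_all (map (\<lambda>i. r i - 1) [1..<m + 1])) y"
proof -
  have "(\<Prod>i=1..m. sylvester_sign p (r i - 1) y) = (\<Prod>i\<leftarrow>[1..<m + 1]. sylvester_sign p (r i - 1) y)"
    by (metis Suc_eq_plus1 atLeastLessThanSuc_atLeastAtMost distinct_upt set_upt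
        prod.distinct_set_conv_list)
  also have "\<dots> = (\<Prod>x\<leftarrow>map (\<lambda>i. r i - 1) [1..<m + 1]. sylvester_sign p x y)"
    by (simp only: map_map o_def)
  finally show ?thesis
    by (simp only: prod_list_sylvester_sign)
qed

lemma sylvester_sign_pow2:
  assumes "k < p"
  shows "sylvester_sign p x (2 ^ k) = (if bit x k then -1 else 1)"
proof -
  have "sylvester_sign p x (2 ^ k) = (\<Prod>l<p. if l = k then (if bit x k then -1 else 1) else 1)"
    unfolding sylvester_sign_def by (rule prod.cong) (auto simp: bit_simps)
  then show ?thesis using assms by simp
qed

lemma sylvester_sign_Suc:
  "sylvester_sign (Suc p) x y = (if bit x p \<and> bit y p then -1 else 1) * sylvester_sign p x y"
  by (simp add: sylvester_sign_def)

lemma sylvester_sign_take_bit: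
  "sylvester_sign p (take_bit p x) (take_bit p y) = sylvester_sign p x y"
  unfolding sylvester_sign_def by (rule prod.cong) (simp_all add: bit_take_bit_iff)

lemma bit_take_bit_below_double:
  fixes a :: nat
  assumes "a < 2 ^ Suc p"
  shows "bit a p \<longleftrightarrow> 2 ^ p \<le> a"
    and "take_bit p a = (if 2 ^ p \<le> a then a - 2 ^ p else a)"
proof -
  have "a div 2 ^ p = (if 2 ^ p \<le> a then 1 else 0)"
    using assms by (auto simp: div_nat_eqI)
  then show "bit a p \<longleftrightarrow> 2 ^ p \<le> a"
    by (simp add: bit_iff_odd)
  show "take_bit p a = (if 2 ^ p \<le> a then a - 2 ^ p else a)"
    using assms by (auto simp: take_bit_nat_def le_mod_geq)
qed

lemma sylvester_Suc:
  "sylvester (Suc p) i j =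
     (if 2 ^ p < i \<and> 2 ^ p < j then -1 else 1) *
     sylvester p (if 2 ^ p < i then i - 2 ^ p else i) (if 2 ^ p < j then j - 2 ^ p else j)"
  by (simp add: Let_def not_le)

lemma sylvester_eq_sylvester_sign:
  assumes "i \<in> {1..2 ^ p}" and "j \<in> {1..2 ^ p}"
  shows "sylvester p i j = sylvester_sign p (i - 1) (j - 1)"
  using assms
proof (induction p arbitrary: i j)
  case 0
  then show ?case by (simp add: sylvester_sign_def)
next
  case (Suc p)
  let ?reduce = "\<lambda>a :: nat. if 2 ^ p < a then a - 2 ^ p else a"
  have reduce: "take_bit p (a - 1) = ?reduce a - 1"
    and high_bit: "bit (a - 1) p \<longleftrightarrow> 2 ^ p < a"
    and reduced_range: "?reduce a \<in> {1..2 ^ p}"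
    if "a \<in> {1..2 ^ Suc p}" for a :: nat
  proof -
    have "a - 1 < 2 ^ Suc p" using that by auto
    note below_double = bit_take_bit_below_double[OF this]
    show "take_bit p (a - 1) = ?reduce a - 1"
      using below_double(2) that by auto
    show "bit (a - 1) p \<longleftrightarrow> 2 ^ p < a"
      using below_double(1) that by auto
    show "?reduce a \<in> {1..2 ^ p}"
      using that by auto
  qed
  have "sylvester (Suc p) i j =
      (if 2 ^ p < i \<and> 2 ^ p < j then -1 else 1) * sylvester p (?reduce i) (?reduce j)"
    by (rule sylvester_Suc)
  also have "\<dots> = (if bit (i - 1) p \<and> bit (j - 1) p then -1 else 1) *
      sylvester_sign p (take_bit p (i - 1)) (take_bit p (j - 1))"
    using Suc.IH[OF reduced_range[OF Suc.prems(1)] reduced_range[OF Suc.prems(2)]]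
    by (simp only: high_bit reduce Suc.prems)
  also have "\<dots> = sylvester_sign (Suc p) (i - 1) (j - 1)"
    by (simp only: sylvester_sign_take_bit sylvester_sign_Suc)
  finally show ?case .
qed

lemma xor_less_pow2:
  fixes x y :: nat
  shows "x < 2 ^ p \<Longrightarrow> y < 2 ^ p \<Longrightarrow> x XOR y < 2 ^ p"
  by (simp flip: take_bit_nat_eq_self_iff add: take_bit_xor)

lemma xor_all_less_pow2: "\<forall>x\<in>set xs. x < 2 ^ p \<Longrightarrow> xor_all xs < 2 ^ p"
  by (induction xs) (simp_all add: xor_all_def xor_less_pow2)

lemma nonzero_less_pow2E:
  fixes s :: nat
  assumes "s \<noteq> 0" and "s < 2 ^ p"
  obtains k where "k < p" and "bit s k"
proof -
  obtain k where "bit s k"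
    using assms(1) bit_eqI[of s 0] by auto
  moreover have "k < p"
    using \<open>bit s k\<close> assms(2) bit_take_bit_iff[of p s k] by (simp add: take_bit_nat_eq_self)
  ultimately show thesis using that by blast
qed

definition xor_shift :: "nat \<Rightarrow> nat \<Rightarrow> nat \<Rightarrow> nat" where
  "xor_shift p d j = (if j \<in> {1..2 ^ p} then ((j - 1) XOR d) + 1 else j)"

lemma xor_shift_in_range:
  assumes "d < 2 ^ p" and "j \<in> {1..2 ^ p}"
  shows "xor_shift p d j \<in> {1..2 ^ p}"
proof -
  have "j - 1 < 2 ^ p" using assms(2) by auto
  then have "(j - 1) XOR d < 2 ^ p" using assms(1) by (rule xor_less_pow2)
  then show ?thesis using assms(2) by (simp add: xor_shift_def)
qed

lemma xor_shift_involution: "d < 2 ^ p \<Longrightarrow> xor_shift p d (xor_shift p d j) = j"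
  using xor_shift_in_range[of d p j] by (auto simp: xor_shift_def xor.assoc)

lemma xor_shift_permutes:
  assumes "d < 2 ^ p"
  shows "xor_shift p d permutes {1..2 ^ p}"
proof (rule bij_imp_permutes)
  show "bij_betw (xor_shift p d) {1..2 ^ p} {1..2 ^ p}"
    using xor_shift_in_range[OF assms] xor_shift_involution[OF assms]
    by (intro bij_betw_byWitness[where f' = "xor_shift p d"]) blast+
  show "xor_shift p d j = j" if "j \<notin> {1..2 ^ p}" for j
    using that unfolding xor_shift_def by auto
qed

lemma sylvester_xor_shift:
  assumes "d < 2 ^ p" and "i \<in> {1..2 ^ p}" and "j \<in> {1..2 ^ p}"
  shows "sylvester p i (xor_shift p d j) = sylvester_sign p (i - 1) d * sylvester p i j"
proof -
  have "sylvester p i (xor_shift p d j) = sylvester_sign p (i - 1) ((j - 1) XOR d)"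
    using assms xor_shift_in_range[OF assms(1,3)]
    by (simp add: sylvester_eq_sylvester_sign xor_shift_def)
  then show ?thesis
    using assms by (simp add: sylvester_sign_xor_right sylvester_eq_sylvester_sign)
qed

lemma permanent_column_permutation_scaled:
  assumes \<tau>: "\<tau> permutes {1..m}"
    and scaled: "\<And>i j. i \<in> {1..m} \<Longrightarrow> j \<in> {1..m} \<Longrightarrow> A i (\<tau> j) = c i * A i j"
  shows "permanent m A = (\<Prod>i=1..m. c i) * permanent m A"
proof -
  have "permanent m A = (\<Sum>\<sigma> | \<sigma> permutes {1..m}. \<Prod>i=1..m. A i ((\<tau> \<circ> \<sigma>) i))"
    unfolding permanent_def by (rule setum_permutations_compose_left[OF \<tau>])
  also have "\<dots> = (\<Sum>\<sigma> | \<sigma> permutes {1..m}. (\<Prod>i=1..m. c i) * (\<Prod>i=1..m. A i (\<sigma> i)))"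
  proof (intro sum.cong refl)
    fix \<sigma> assume "\<sigma> \<in> {\<sigma>. \<sigma> permutes {1..m}}"
    then have "\<sigma> permutes {1..m}" by simp
    then have "\<sigma> i \<in> {1..m}" if "i \<in> {1..m}" for i
      using that by (simp only: permutes_in_image)
    then show "(\<Prod>i=1..m. A i ((\<tau> \<circ> \<sigma>) i)) = (\<Prod>i=1..m. c i) * (\<Prod>i=1..m. A i (\<sigma> i))"
      by (simp add: scaled prod.distrib[symmetric] del: atLeastAtMost_iff cong: prod.cong)
  qed
  also have "\<dots> = (\<Prod>i=1..m. c i) * permanent m A"
    by (simp add: permanent_def sum_distrib_left)
  finally show ?thesis .
qed

theorem proposition5:
  fixes p :: nat and r :: "nat \<Rightarrow> nat"
  assumes "\<forall>i\<in>{1..2^p}. r i \<in> {1..2^p}"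
    and "xor_all (map (\<lambda>i. r i - 1) [1..<2^p + 1]) \<noteq> 0"
  shows "permanent (2^p) (\<lambda>i j. sylvester p (r i) j) = 0"
proof -
  let ?xs = "map (\<lambda>i. r i - 1) [1..<2^p + 1]"
  have "r i - 1 < 2 ^ p" if "i \<in> {1..2^p}" for i
    using assms(1) that by fastforce
  then have "xor_all ?xs < 2 ^ p"
    by (intro xor_all_less_pow2) auto
  then obtain k where "k < p" and k: "bit (xor_all ?xs) k"
    using assms(2) nonzero_less_pow2E by blast
  define d :: nat where "d = 2 ^ k"
  have d: "d < 2 ^ p"
    using \<open>k < p\<close> by (simp add: d_def)
  have row_factors: "(\<Prod>i=1..2^p. sylvester_sign p (r i - 1) d) = -1"
    unfolding prod_sylvester_sign_rows
    by (simp only: d_def sylvester_sign_pow2[OF \<open>k < p\<close>] k if_True)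
  have "permanent (2^p) (\<lambda>i j. sylvester p (r i) j) =
      (\<Prod>i=1..2^p. sylvester_sign p (r i - 1) d) * permanent (2^p) (\<lambda>i j. sylvester p (r i) j)"
    using assms(1)
    by (intro permanent_column_permutation_scaled[OF xor_shift_permutes[OF d]]
        sylvester_xor_shift[OF d]) auto
  then show ?thesis
    using row_factors by simp
qed

end
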